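(* Let $D\ge1$, $2\le p\le 2+4/D$ and $N>0$. Then there exists $\lambda>0$ such that for every $J\in\mathbf{N}^D$ the Hamiltonian $H_{\Delta(J)}$ is uniformly convex on $\Omega_N$, i.e. there is $c>0$ with $\frac{d^2}{dt^2}\big|_{t=0}H_{\Delta(J)}(u+tv)\ge c\int_{\mathbf{T}^D}|P_Jv(\theta)|^2\frac{d^D\theta}{(2\pi)^D}$ for all $u\in\Omega_N$ and $v\in L^2(\mathbf{T}^D;\mathbf{C})$.
   Context: $\mathbf{T}^D=(\mathbf{R}/2\pi\mathbf{Z})^D$ with normalized measure $d^D\theta/(2\pi)^D$. $\Omega_N=\{u\in L^2(\mathbf{T}^D;\mathbf{C}):\int|u|^2\frac{d^D\theta}{(2\pi)^D}\le N\}$. For $j\in\mathbf{N}$ let $\Delta_j=\{2^{j-1},2^{j-1}+1,\dots,2^j-1\}$, for $J=(j_1,\dots,j_D)\in\mathbf{N}^D$ let $\Delta(J)=\Delta_{j_1}\times\cdots\times\Delta_{j_D}$, and let $P_J$ be the orthogonal (Dirichlet) projection of $L^2(\mathbf{T}^D)$ onto $\mathrm{span}\{e^{ik\cdot\theta}:k\in\Delta(J)\}$. For $\lambda>0$, $H_{\Delta(J)}(u)=\frac12\int_{\mathbf{T}^D}\|\nabla P_Ju\|^2\frac{d^D\theta}{(2\pi)^D}-\frac{\lambda}{p}\int_{\mathbf{T}^D}|P_Ju|^p\frac{d^D\theta}{(2\pi)^D}$. The paper says only "uniformly convex on $\Omega_N$"; since $H_{\Delta(J)}$ depends on $u$ only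 through $P_Ju$, uniform convexity is understood as the lower bound on the second derivative stated in the claim. *)

theory Defs
  imports "HOL-Analysis.Analysis"
begin

text \<open>The torus T^D is modelled by the fundamental cube [0,2pi]^D in real^'n,
  D = CARD('n); functions on the torus are functions on real^'n, only their
  values on the cube matter for integrals.\<close>

definition torus_box :: "(real^'n) set" where
  "torus_box = cbox 0 (\<chi> i. 2 * pi)"

definition tmeas :: "(real^'n) measure" where
  "tmeas = lebesgue_on torus_box"

definition tavg :: "(real^'n \<Rightarrow> real) \<Rightarrow> real" where
  "tavg f = (LINT x|(tmeas::(real^'n) measure). f x) / (2 * pi) ^ CARD('n)"

definition tavgc :: "(real^'n \<Rightarrow> complex) \<Rightarrow> complex" where
  "tavgc f = (LINT x|(tmeas::(real^'n) measure). f x) / of_real ((2 * pi) ^ CARD('n))"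

definition L2T :: "(real^'n \<Rightarrow> complex) \<Rightarrow> bool" where
  "L2T u \<longleftrightarrow> u \<in> borel_measurable (tmeas::(real^'n) measure)
     \<and> integrable (tmeas::(real^'n) measure) (\<lambda>x. (cmod (u x))^2)"

definition Omega :: "real \<Rightarrow> (real^'n \<Rightarrow> complex) set" where
  "Omega N = {u. L2T u \<and> tavg (\<lambda>x. (cmod (u x))^2) \<le> N}"

definition Delta1 :: "nat \<Rightarrow> int set" where
  "Delta1 j = {2 ^ (j - 1) .. 2 ^ j - 1}"

definition DeltaJ :: "nat^'n \<Rightarrow> (int^'n) set" where
  "DeltaJ J = {k. \<forall>i. k $ i \<in> Delta1 (J $ i)}"

definition echar :: "int^'n \<Rightarrow> real^'n \<Rightarrow> complex" where
  "echar k \<theta> = exp (\<i> * of_real (\<Sum>i\<in>UNIV. of_int (k $ i) * \<theta> $ i))"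

definition fcoeff :: "(real^'n \<Rightarrow> complex) \<Rightarrow> int^'n \<Rightarrow> complex" where
  "fcoeff u k = tavgc (\<lambda>\<theta>. u \<theta> * cnj (echar k \<theta>))"

definition PJ :: "nat^'n \<Rightarrow> (real^'n \<Rightarrow> complex) \<Rightarrow> real^'n \<Rightarrow> complex" where
  "PJ J u \<theta> = (\<Sum>k\<in>DeltaJ J. fcoeff u k * echar k \<theta>)"

definition partialD :: "(real^'n \<Rightarrow> complex) \<Rightarrow> 'n \<Rightarrow> real^'n \<Rightarrow> complex" where
  "partialD f j \<theta> = vector_derivative (\<lambda>t. f (\<theta> + t *\<^sub>R axis j 1)) (at 0)"

definition gradnorm2 :: "(real^'n \<Rightarrow> complex) \<Rightarrow> real^'n \<Rightarrow> real" where
  "gradnorm2 f \<theta> = (\<Sum>j\<in>UNIV. (cmod (partialD f j \<theta>))^2)"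

definition Ham :: "real \<Rightarrow> real \<Rightarrow> nat^'n \<Rightarrow> (real^'n \<Rightarrow> complex) \<Rightarrow> real" where
  "Ham lam p J u = (1/2) * tavg (\<lambda>\<theta>. gradnorm2 (PJ J u) \<theta>)
      - lam / p * tavg (\<lambda>\<theta>. (cmod (PJ J u \<theta>)) powr p)"

end

theory Submission
  imports Defs
begin

text \<open>
  Everything is explicit on the Fourier side. The second variation of the Hamiltonian at \<open>u\<close> in
  direction \<open>v\<close> is the kinetic term \<open>\<Sum>\<^sub>k |k|^2 |v\<^sub>k|^2\<close> (over \<open>k \<in> \<Delta>(J)\<close>) minus \<open>\<lambda>/p\<close> times
  the average of \<open>\<partial>\<^sub>t^2 |P\<^sub>J u + t P\<^sub>J v|^p \<le> p(p-1) |P\<^sub>J u|^(p-2) |P\<^sub>J v|^2\<close>.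
  Every \<open>k \<in> \<Delta>(J)\<close> has \<open>|k|^2 \<ge> M = \<Sum>\<^sub>i 4^(J\<^sub>i - 1)\<close>, so the kinetic term is at least
  \<open>M \<parallel>P\<^sub>J v\<parallel>^2\<close>. By Cauchy-Schwarz and Bessel, \<open>|P\<^sub>J u| \<le> (#\<Delta>(J) N)^(1/2)\<close> on \<open>\<Omega>\<^sub>N\<close>,
  and \<open>#\<Delta>(J)^(2/D) \<le> M\<close>, so \<open>p \<le> 2 + 4/D\<close> gives \<open>(#\<Delta>(J) N)^((p-2)/2) \<le> M N^2\<close> for \<open>N \<ge> 1\<close>.
  Hence \<open>\<lambda> = 1/(2(p-1)N^2)\<close>, which does not depend on \<open>J\<close>, leaves the convexity constant \<open>c = M/2\<close>.
\<close>

section \<open>Integration over the torus\<close>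

lemma space_tmeas: "space (tmeas::(real^'n) measure) = torus_box"
  unfolding tmeas_def by (simp add: space_restrict_space)

lemma
  fixes f :: "real^'n \<Rightarrow> 'b::euclidean_space"
  assumes "continuous_on torus_box f"
  shows integrable_tmeas_continuous: "integrable (tmeas::(real^'n) measure) f"
    and integral_tmeas_continuous: "(LINT x|(tmeas::(real^'n) measure). f x) = integral torus_box f"
proof -
  have ai: "f absolutely_integrable_on torus_box"
    using assms absolutely_integrable_continuous unfolding torus_box_def by blast
  show "integrable (tmeas::(real^'n) measure) f"
    unfolding tmeas_def using absolutely_integrable_imp_integrable[OF ai] by (simp add: torus_box_def)
  have "(LINT x|(tmeas::(real^'n) measure). f x) = (LINT x:torus_box|lebesgue. f x)"
    unfolding tmeas_def set_lebesgue_integral_def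
    by (subst integral_restrict_space) (auto simp: torus_box_def)
  also have "\<dots> = integral torus_box f"
    by (rule set_lebesgue_integral_eq_integral(2)[OF ai])
  finally show "(LINT x|(tmeas::(real^'n) measure). f x) = integral torus_box f" .
qed

lemma tavg_continuous:
  fixes f :: "real^'n \<Rightarrow> real"
  assumes "continuous_on torus_box f"
  shows "tavg f = integral torus_box f / (2 * pi) ^ CARD('n)"
  unfolding tavg_def using integral_tmeas_continuous[OF assms] by simp

lemma tavg_cmult: "tavg (\<lambda>\<theta>. c * f \<theta>) = c * tavg f"
  unfolding tavg_def by simp

lemma tavg_sum:
  fixes f :: "'i \<Rightarrow> real^'n \<Rightarrow> real"
  assumes "finite I" "\<And>i. i \<in> I \<Longrightarrow> continuous_on torus_box (f i)"
  shows "tavg (\<lambda>\<theta>. \<Sum>i\<in>I. f i \<theta>) = (\<Sum>i\<in>I. tavg (f i))"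
proof -
  have "\<And>i. i \<in> I \<Longrightarrow> integrable (tmeas::(real^'n) measure) (f i)"
    using assms(2) by (rule integrable_tmeas_continuous)
  then show ?thesis
    unfolding tavg_def by (simp add: Bochner_Integration.integral_sum sum_divide_distrib)
qed

lemma tavg_mono:
  fixes f g :: "real^'n \<Rightarrow> real"
  assumes "continuous_on torus_box f" "continuous_on torus_box g"
    and "\<And>\<theta>. \<theta> \<in> torus_box \<Longrightarrow> f \<theta> \<le> g \<theta>"
  shows "tavg f \<le> tavg g"
  unfolding tavg_def
  by (intro divide_right_mono integral_mono integrable_tmeas_continuous assms)
    (auto simp: space_tmeas assms)

lemma L2T_integrable:
  fixes u :: "real^'n \<Rightarrow> complex"
  assumes "L2T u"
  shows "integrable (tmeas::(real^'n) measure) u"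
proof -
  interpret finite_measure "tmeas::(real^'n) measure"
    unfolding tmeas_def torus_box_def by (intro finite_measure_lebesgue_on) auto
  have "integrable tmeas (\<lambda>x. 1 + (cmod (u x))^2)"
    using assms unfolding L2T_def by auto
  moreover have "u \<in> borel_measurable tmeas"
    using assms unfolding L2T_def by simp
  moreover have "norm (u x) \<le> norm (1 + (cmod (u x))^2)" for x
  proof -
    have "0 \<le> (cmod (u x) - 1)^2" by simp
    then have "2 * cmod (u x) \<le> 1 + (cmod (u x))^2" by (simp add: power2_eq_square algebra_simps)
    then have "cmod (u x) \<le> 1 + (cmod (u x))^2" using norm_ge_zero[of "u x"] by linarith
    then show ?thesis by simp
  qed
  ultimately show ?thesis
    by (rule Bochner_Integration.integrable_bound[OF _ _ AE_I2])
qed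

lemma integrable_tmeas_mult_continuous:
  fixes u f :: "real^'n \<Rightarrow> complex"
  assumes u: "integrable (tmeas::(real^'n) measure) u" and f: "continuous_on torus_box f"
  shows "integrable (tmeas::(real^'n) measure) (\<lambda>\<theta>. u \<theta> * f \<theta>)"
proof -
  obtain B where B: "\<And>x. x \<in> torus_box \<Longrightarrow> norm (f x) \<le> B"
    using compact_imp_bounded[OF compact_continuous_image[OF f]]
    unfolding bounded_iff torus_box_def by auto
  have mf: "f \<in> borel_measurable (tmeas::(real^'n) measure)"
    unfolding tmeas_def
    by (rule continuous_imp_measurable_on_sets_lebesgue[OF f]) (auto simp: torus_box_def)
  have bound: "norm (u x * f x) \<le> norm (B * cmod (u x))" if "x \<in> space tmeas" for x
  proof -
    have "cmod (f x) * cmod (u x) \<le> B * cmod (u x)"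
      using that B by (intro mult_right_mono) (auto simp: space_tmeas)
    then show ?thesis by (simp add: norm_mult mult_ac)
  qed
  show ?thesis
    apply (rule Bochner_Integration.integrable_bound[where f="\<lambda>\<theta>. B * cmod (u \<theta>)"])
    using u apply simp
    using u mf apply measurable
    using bound by (rule AE_I2)
qed

lemma continuous_on_slice:
  assumes "continuous_on (UNIV \<times> S) (\<lambda>(t, \<theta>). \<psi> t \<theta>)"
  shows "continuous_on S (\<psi> t)"
  using continuous_on_compose2[OF assms continuous_on_Pair[OF continuous_on_const continuous_on_id]]
  by auto

lemma tavg_has_real_derivative:
  fixes \<psi> \<psi>' :: "real \<Rightarrow> real^'n \<Rightarrow> real"
  assumes d: "\<And>t \<theta>. \<theta> \<in> torus_box \<Longrightarrow> ((\<lambda>t. \<psi> t \<theta>) has_real_derivative \<psi>' t \<theta>) (at t)"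
    and c: "\<And>t. continuous_on torus_box (\<psi> t)"
    and c': "continuous_on (UNIV \<times> torus_box) (\<lambda>(t, \<theta>). \<psi>' t \<theta>)"
  shows "((\<lambda>t. tavg (\<psi> t)) has_real_derivative tavg (\<psi>' t0)) (at t0)"
proof -
  have "((\<lambda>t. integral torus_box (\<psi> t)) has_real_derivative integral torus_box (\<psi>' t0)) (at t0 within UNIV)"
    unfolding torus_box_def
    apply (rule leibniz_rule_field_derivative)
    using d apply (simp add: torus_box_def)
    using c apply (simp add: torus_box_def integrable_continuous)
    using c' apply (simp add: torus_box_def)
    by simp_all
  then have "((\<lambda>t. integral torus_box (\<psi> t) / (2 * pi) ^ CARD('n)) has_real_derivative
      integral torus_box (\<psi>' t0) / (2 * pi) ^ CARD('n)) (at t0)"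
    by (intro DERIV_cdivide) simp
  then show ?thesis
    using tavg_continuous[OF c] tavg_continuous[OF continuous_on_slice[OF c']] by simp
qed

section \<open>Characters\<close>

lemma integral_lborel_prod_Basis:
  fixes f :: "'a::euclidean_space \<Rightarrow> real \<Rightarrow> complex"
  assumes int: "\<And>b. b \<in> Basis \<Longrightarrow> integrable lborel (f b)"
  shows "(LINT x|(lborel::'a measure). (\<Prod>b\<in>Basis. f b (x \<bullet> b))) = (\<Prod>b\<in>Basis. LINT x|lborel. f b x)"
proof -
  interpret product_sigma_finite "\<lambda>_::'a. lborel::real measure" by standard
  have meas: "\<And>b. b \<in> Basis \<Longrightarrow> f b \<in> borel_measurable borel"
    using int by (simp add: borel_measurable_integrable)
  have "(LINT x|(lborel::'a measure). (\<Prod>b\<in>Basis. f b (x \<bullet> b)))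
     = (LINT x|(\<Pi>\<^sub>M b\<in>(Basis::'a set). lborel). (\<Prod>b\<in>Basis. f b ((\<Sum>b'\<in>Basis. x b' *\<^sub>R b') \<bullet> b)))"
    apply (subst lborel_eq)
    apply (subst integral_distr)
      apply measurable
    using meas apply measurable
    done
  also have "\<dots> = (LINT x|(\<Pi>\<^sub>M b\<in>(Basis::'a set). lborel). (\<Prod>b\<in>Basis. f b (x b)))"
    by (intro Bochner_Integration.integral_cong prod.cong)
      (simp_all add: inner_sum_left inner_Basis if_distrib cong: if_cong)
  also have "\<dots> = (\<Prod>b\<in>Basis. LINT x|lborel. f b x)"
    by (rule product_integral_prod) (auto intro: int)
  finally show ?thesis .
qed

lemma
  fixes g :: "'a::euclidean_space \<Rightarrow> 'b::euclidean_space"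
  assumes "continuous_on (cbox a b) g"
  shows integrable_lborel_indicator_continuous: "integrable lborel (\<lambda>x. indicator (cbox a b) x *\<^sub>R g x)"
    and integral_lborel_indicator_continuous:
      "(LINT x|lborel. indicator (cbox a b) x *\<^sub>R g x) = integral (cbox a b) g"
proof -
  have m: "(\<lambda>x. indicator (cbox a b) x *\<^sub>R g x) \<in> borel_measurable lborel"
    using borel_measurable_continuous_on_indicator[OF _ assms] by simp
  have ai: "g absolutely_integrable_on cbox a b"
    by (rule absolutely_integrable_continuous[OF assms])
  then show "integrable lborel (\<lambda>x. indicator (cbox a b) x *\<^sub>R g x)"
    using integrable_completion[OF m] by (simp add: set_integrable_def)
  have "(LINT x|lborel. indicator (cbox a b) x *\<^sub>R g x) = (LINT x:cbox a b|lebesgue. g x)"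
    using integral_completion[OF m] by (simp add: set_lebesgue_integral_def)
  also have "\<dots> = integral (cbox a b) g"
    by (rule set_lebesgue_integral_eq_integral(2)[OF ai])
  finally show "(LINT x|lborel. indicator (cbox a b) x *\<^sub>R g x) = integral (cbox a b) g" .
qed

lemma integral_exp_i_int_mult:
  fixes c :: real
  assumes "c \<in> \<int>"
  shows "integral {0..2*pi} (\<lambda>x. exp (\<i> * of_real (c * x))) = (if c = 0 then 2*pi else 0)"
proof (cases "c = 0")
  case True then show ?thesis by (simp add: scaleR_conv_of_real)
next
  case False
  have "((\<lambda>x. exp (\<i> * of_real (c * x)) / (\<i> * of_real c)) has_vector_derivative
      exp (\<i> * of_real (c * x))) (at x within {0..2*pi})" for x
  proof -
    have "((\<lambda>z. exp (\<i> * (of_real c * z)) / (\<i> * of_real c)) has_field_derivative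
        exp (\<i> * (of_real c * of_real x))) (at (of_real x))"
      by (rule derivative_eq_intros refl | simp)+ (use False in \<open>auto simp: divide_simps mult_ac\<close>)
    from has_vector_derivative_real_field[OF this] show ?thesis
      by simp
  qed
  then have "((\<lambda>x. exp (\<i> * of_real (c * x))) has_integral
       (exp (\<i> * of_real (c * (2*pi))) / (\<i> * of_real c) - exp (\<i> * of_real (c * 0)) / (\<i> * of_real c))) {0..2*pi}"
    by (intro fundamental_theorem_of_calculus) simp_all
  moreover have "exp (\<i> * of_real (c * (2*pi))) = 1"
    using cis_multiple_2pi[OF assms] by (simp add: cis_conv_exp mult_ac)
  ultimately show ?thesis using False by (simp add: integral_unique)
qed

lemma continuous_on_echar [continuous_intros]: "continuous_on S (echar m)"
  unfolding echar_def by (intro continuous_intros)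

lemma norm_echar [simp]: "cmod (echar k \<theta>) = 1"
  unfolding echar_def by (simp add: norm_exp_i_times)

lemma echar_mult_cnj: "echar k \<theta> * cnj (echar l \<theta>) = echar (k - l) \<theta>"
proof -
  have "exp (\<i> * of_real a) * cnj (exp (\<i> * of_real b)) = exp (\<i> * of_real (a - b))" for a b
    unfolding cis_conv_exp[symmetric] by (simp add: cis_mult cis_cnj)
  from this[of "\<Sum>i\<in>UNIV. of_int (k $ i) * \<theta> $ i" "\<Sum>i\<in>UNIV. of_int (l $ i) * \<theta> $ i"]
  show ?thesis
    unfolding echar_def by (simp add: sum_subtractf left_diff_distrib)
qed

lemma indicator_torus_box_prod_Basis:
  "(indicator torus_box x::real) = (\<Prod>b\<in>(Basis::(real^'n) set). indicator {0..2*pi} (x \<bullet> b))"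
proof (cases "x \<in> torus_box")
  case True
  then have "\<And>b. b \<in> (Basis::(real^'n) set) \<Longrightarrow> x \<bullet> b \<in> {0..2*pi}"
    unfolding torus_box_def mem_box by (auto simp: Basis_vec_def inner_axis)
  then show ?thesis using True by (simp add: indicator_def)
next
  case False
  then obtain i where "\<not> (0 \<le> x $ i \<and> x $ i \<le> 2*pi)"
    unfolding torus_box_def mem_box by (auto simp: Basis_vec_def inner_axis)
  then have "axis i 1 \<in> (Basis::(real^'n) set)" "x \<bullet> axis i 1 \<notin> {0..2*pi}"
    by (auto simp: Basis_vec_def inner_axis)
  then have "\<exists>b\<in>(Basis::(real^'n) set). x \<bullet> b \<notin> {0..2*pi}" by blast
  then show ?thesis using False
    by (simp add: indicator_def prod_zero_iff del: atLeastAtMost_iff)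
qed

lemma echar_prod_Basis:
  fixes m :: "int^'n"
  defines "M \<equiv> (\<chi> i. of_int (m $ i)) :: real^'n"
  shows "echar m x = (\<Prod>b\<in>Basis. exp (\<i> * of_real ((M \<bullet> b) * (x \<bullet> b))))"
proof -
  have "(\<Sum>i\<in>UNIV. of_int (m $ i) * x $ i) = M \<bullet> x"
    by (simp add: M_def inner_vec_def)
  also have "\<dots> = (\<Sum>b\<in>Basis. (M \<bullet> b) * (x \<bullet> b))"
    by (rule euclidean_inner)
  finally show ?thesis
    unfolding echar_def by (simp add: sum_distrib_left exp_sum)
qed

text \<open>By Fubini the integral factors into one-dimensional integrals over \<open>[0, 2\<pi>]\<close>.\<close>

lemma integral_echar:
  fixes m :: "int^'n"
  shows "integral torus_box (echar m) = (if m = 0 then of_real ((2*pi)^CARD('n)) else 0)"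
proof -
  define M :: "real^'n" where "M = (\<chi> i. of_int (m $ i))"
  define e where "e b = (\<lambda>y::real. exp (\<i> * of_real ((M \<bullet> b) * y)))" for b :: "real^'n"
  have cont_e: "continuous_on (cbox 0 (2*pi)) (e b)" for b
    unfolding e_def by (intro continuous_intros)
  have "integral torus_box (echar m) = (LINT x|lborel. indicator torus_box x *\<^sub>R echar m x)"
    unfolding torus_box_def
    by (rule integral_lborel_indicator_continuous[symmetric]) (intro continuous_intros)
  also have "\<dots> = (LINT x|lborel. (\<Prod>b\<in>(Basis::(real^'n) set). indicator {0..2*pi} (x \<bullet> b) *\<^sub>R e b (x \<bullet> b)))"
    by (simp add: indicator_torus_box_prod_Basis echar_prod_Basis e_def M_def prod.distrib
        scaleR_conv_of_real)
  also have "\<dots> = (\<Prod>b\<in>(Basis::(real^'n) set). LINT y|lborel. indicator {0..2*pi} y *\<^sub>R e b y)"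
    using integrable_lborel_indicator_continuous[OF cont_e]
    by (intro integral_lborel_prod_Basis) (simp add: cbox_interval)
  also have "\<dots> = (\<Prod>b\<in>(Basis::(real^'n) set). if M \<bullet> b = 0 then of_real (2*pi) else 0)"
  proof (rule prod.cong[OF refl])
    fix b :: "real^'n" assume "b \<in> Basis"
    then have "M \<bullet> b \<in> \<int>"
      by (auto simp: Basis_vec_def M_def inner_axis inner_axis')
    then show "(LINT y|lborel. indicator {0..2*pi} y *\<^sub>R e b y) = (if M \<bullet> b = 0 then of_real (2*pi) else 0)"
      using integral_lborel_indicator_continuous[OF cont_e, of b] integral_exp_i_int_mult[of "M \<bullet> b"]
      by (simp add: cbox_interval e_def)
  qed
  also have "\<dots> = (if m = 0 then of_real ((2*pi)^CARD('n)) else 0)"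
  proof (cases "m = 0")
    case True
    then have "\<And>b. b \<in> (Basis::(real^'n) set) \<Longrightarrow> M \<bullet> b = 0"
      by (simp add: M_def vec_eq_iff zero_vec_def[symmetric])
    then show ?thesis using True by (simp add: prod_constant)
  next
    case False
    then obtain i where "m $ i \<noteq> 0" by (metis vec_eq_iff zero_index)
    then have "axis i 1 \<in> (Basis::(real^'n) set)" "M \<bullet> axis i 1 \<noteq> 0"
      by (auto simp: Basis_vec_def M_def inner_axis inner_axis')
    then have "\<exists>b\<in>(Basis::(real^'n) set). (if M \<bullet> b = 0 then complex_of_real (2 * pi) else 0) = 0"
      by force
    then show ?thesis using False by (simp add: prod_zero_iff del: if_image_distrib)
  qed
  finally show ?thesis .
qed

lemma integral_echar_mult_cnj:
  "(LINT \<theta>|(tmeas::(real^'n) measure). echar k \<theta> * cnj (echar l \<theta>))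
    = (if k = l then of_real ((2*pi)^CARD('n)) else 0)"
  unfolding echar_mult_cnj
  by (simp add: integral_tmeas_continuous continuous_on_echar integral_echar)

section \<open>Trigonometric polynomials\<close>

definition trig :: "(int^'n) set \<Rightarrow> (int^'n \<Rightarrow> complex) \<Rightarrow> real^'n \<Rightarrow> complex" where
  "trig E c \<theta> = (\<Sum>k\<in>E. c k * echar k \<theta>)"

lemma PJ_eq_trig: "PJ J u = trig (DeltaJ J) (fcoeff u)"
  by (simp add: fun_eq_iff PJ_def trig_def)

lemma continuous_on_trig [continuous_intros]: "continuous_on S (trig E c)"
  unfolding trig_def by (intro continuous_intros)

lemma continuous_on_trig_comp [continuous_intros]:
  "continuous_on S f \<Longrightarrow> continuous_on S (\<lambda>x. trig E c (f x))"
  by (rule continuous_on_compose2[OF continuous_on_trig[of UNIV]]) auto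

lemma trig_add_scaled: "trig E c \<theta> + of_real t * trig E d \<theta> = trig E (\<lambda>k. c k + of_real t * d k) \<theta>"
  by (simp add: trig_def sum.distrib sum_distrib_left algebra_simps)

lemma fcoeff_add_scaled:
  assumes "L2T u" "L2T v"
  shows "fcoeff (\<lambda>\<theta>::real^'n. u \<theta> + of_real t * v \<theta>) k = fcoeff u k + of_real t * fcoeff v k"
proof -
  have "integrable (tmeas::(real^'n) measure) (\<lambda>\<theta>. w \<theta> * cnj (echar k \<theta>))" if "L2T w" for w
    by (rule integrable_tmeas_mult_continuous[OF L2T_integrable[OF that]]) (intro continuous_intros)
  with assms show ?thesis
    unfolding fcoeff_def tavgc_def by (simp add: distrib_right mult.assoc add_divide_distrib)
qed

lemma tavg_norm_trig_squared:
  assumes E: "finite E"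
  shows "tavg (\<lambda>\<theta>::real^'n. cmod (trig E c \<theta>) ^ 2) = (\<Sum>k\<in>E. cmod (c k) ^ 2)"
proof -
  let ?V = "(2*pi)^CARD('n)"
  have int: "integrable (tmeas::(real^'n) measure) (\<lambda>\<theta>. echar k \<theta> * cnj (echar l \<theta>))" for k l
    by (rule integrable_tmeas_continuous) (intro continuous_intros)
  have "complex_of_real (LINT \<theta>|(tmeas::(real^'n) measure). cmod (trig E c \<theta>) ^ 2)
      = (LINT \<theta>|(tmeas::(real^'n) measure). trig E c \<theta> * cnj (trig E c \<theta>))"
    by (simp only: complex_norm_square integral_complex_of_real[symmetric])
  also have "\<dots> = (LINT \<theta>|(tmeas::(real^'n) measure).
      (\<Sum>k\<in>E. \<Sum>l\<in>E. (c k * cnj (c l)) * (echar k \<theta> * cnj (echar l \<theta>))))"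
    by (simp add: trig_def sum_distrib_left sum_distrib_right mult_ac)
      (subst sum.swap, simp add: mult_ac)
  also have "\<dots> = (\<Sum>k\<in>E. \<Sum>l\<in>E. (c k * cnj (c l)) *
      (LINT \<theta>|(tmeas::(real^'n) measure). echar k \<theta> * cnj (echar l \<theta>)))"
    by (simp add: integral_sum integrable_sum int)
  also have "\<dots> = (\<Sum>k\<in>E. (c k * cnj (c k)) * of_real ?V)"
    by (simp add: integral_echar_mult_cnj if_distrib E cong: if_cong)
  also have "\<dots> = (\<Sum>k\<in>E. of_real (cmod (c k) ^ 2) * of_real ?V)"
    by (simp only: complex_norm_square)
  also have "\<dots> = of_real (?V * (\<Sum>k\<in>E. cmod (c k) ^ 2))"
    by (simp only: of_real_mult[symmetric] of_real_sum[symmetric] sum_distrib_left mult.commute)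
  finally show ?thesis
    unfolding tavg_def of_real_eq_iff by simp
qed

lemma integral_mult_cnj_trig:
  fixes u :: "real^'n \<Rightarrow> complex"
  assumes u: "integrable (tmeas::(real^'n) measure) u" and E: "finite E"
  shows "(LINT \<theta>|(tmeas::(real^'n) measure). u \<theta> * cnj (trig E c \<theta>))
    = of_real ((2*pi)^CARD('n)) * (\<Sum>k\<in>E. cnj (c k) * fcoeff u k)"
proof -
  have int: "integrable (tmeas::(real^'n) measure) (\<lambda>\<theta>. u \<theta> * cnj (echar k \<theta>))" for k
    by (rule integrable_tmeas_mult_continuous[OF u]) (intro continuous_intros)
  have "(LINT \<theta>|(tmeas::(real^'n) measure). u \<theta> * cnj (trig E c \<theta>))
      = (LINT \<theta>|(tmeas::(real^'n) measure). (\<Sum>k\<in>E. cnj (c k) * (u \<theta> * cnj (echar k \<theta>))))"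
    unfolding trig_def by (simp add: sum_distrib_left mult_ac)
  also have "\<dots> = (\<Sum>k\<in>E. cnj (c k) * (LINT \<theta>|(tmeas::(real^'n) measure). u \<theta> * cnj (echar k \<theta>)))"
    by (simp add: integral_sum integrable_sum int)
  finally show ?thesis
    by (simp add: fcoeff_def tavgc_def sum_distrib_left mult_ac)
qed

text \<open>For the partial Fourier sum \<open>P\<close> of \<open>u\<close> over \<open>E\<close>, \<open>\<parallel>u - P\<parallel>^2 = \<parallel>u\<parallel>^2 - \<Sum>\<^sub>k |fcoeff u k|^2\<close>.\<close>

lemma bessel_inequality:
  fixes u :: "real^'n \<Rightarrow> complex"
  assumes u: "L2T u" and E: "finite E"
  shows "(\<Sum>k\<in>E. cmod (fcoeff u k) ^ 2) \<le> tavg (\<lambda>\<theta>. cmod (u \<theta>) ^ 2)"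
proof -
  let ?V = "(2*pi)^CARD('n)" and ?T = "tmeas::(real^'n) measure"
  define P where "P = trig E (fcoeff u)"
  define S where "S = (\<Sum>k\<in>E. cmod (fcoeff u k) ^ 2)"
  have iuu: "integrable ?T (\<lambda>\<theta>. cmod (u \<theta>) ^ 2)"
    using u unfolding L2T_def by simp
  define R where "R \<theta> = Re (u \<theta> * cnj (P \<theta>))" for \<theta>
  have iuPc: "integrable ?T (\<lambda>\<theta>. u \<theta> * cnj (P \<theta>))"
    unfolding P_def
    by (intro integrable_tmeas_mult_continuous L2T_integrable u continuous_intros)
  then have iR: "integrable ?T R"
    unfolding R_def by (rule integrable_Re)
  have iPP: "integrable ?T (\<lambda>\<theta>. cmod (P \<theta>) ^ 2)"
    unfolding P_def by (rule integrable_tmeas_continuous) (intro continuous_intros)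
  have "(\<Sum>k\<in>E. cnj (fcoeff u k) * fcoeff u k) = of_real S"
    unfolding S_def of_real_sum complex_norm_square by (simp add: mult.commute)
  then have cross: "(LINT \<theta>|?T. R \<theta>) = ?V * S"
    using integral_Re[OF iuPc] integral_mult_cnj_trig[OF L2T_integrable[OF u] E]
    unfolding P_def R_def by simp
  have PP: "(LINT \<theta>|?T. cmod (P \<theta>) ^ 2) = ?V * S"
    using tavg_norm_trig_squared[OF E, of "fcoeff u"] unfolding tavg_def P_def S_def
    by (simp add: field_simps)
  have "\<And>\<theta>. cmod (u \<theta> - P \<theta>) ^ 2 = cmod (u \<theta>) ^ 2 - 2 * R \<theta> + cmod (P \<theta>) ^ 2"
    unfolding cmod_power2 R_def by (simp add: power2_eq_square algebra_simps)
  then have "(LINT \<theta>|?T. cmod (u \<theta> - P \<theta>) ^ 2) = (LINT \<theta>|?T. cmod (u \<theta>) ^ 2) - ?V * S"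
    using iuu iR iPP cross PP by simp
  moreover have "0 \<le> (LINT \<theta>|?T. cmod (u \<theta> - P \<theta>) ^ 2)" by simp
  ultimately have "?V * S \<le> (LINT \<theta>|?T. cmod (u \<theta>) ^ 2)" by linarith
  then show ?thesis
    unfolding S_def[symmetric] tavg_def by (simp add: pos_le_divide_eq mult.commute)
qed

lemma norm_trig_le:
  assumes E: "finite E"
  shows "cmod (trig E c \<theta>) \<le> sqrt (real (card E) * (\<Sum>k\<in>E. cmod (c k) ^ 2))"
proof (rule real_le_rsqrt)
  have "cmod (trig E c \<theta>) \<le> (\<Sum>k\<in>E. 1 * cmod (c k))"
    unfolding trig_def using norm_sum[of "\<lambda>k. c k * echar k \<theta>" E] by (simp add: norm_mult)
  then have "cmod (trig E c \<theta>) ^ 2 \<le> (\<Sum>k\<in>E. 1 * cmod (c k)) ^ 2"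
    by (intro power_mono) auto
  also have "\<dots> \<le> (\<Sum>k\<in>E. 1 ^ 2) * (\<Sum>k\<in>E. cmod (c k) ^ 2)"
    by (rule Cauchy_Schwarz_ineq_sum)
  finally show "cmod (trig E c \<theta>) ^ 2 \<le> real (card E) * (\<Sum>k\<in>E. cmod (c k) ^ 2)" by simp
qed

lemma echar_shift_axis:
  "echar k (\<theta> + t *\<^sub>R axis j 1)
    = exp (\<i> * (of_real (\<Sum>i\<in>UNIV. of_int (k $ i) * \<theta> $ i) + of_real t * of_int (k $ j)))"
proof -
  have "(\<Sum>i\<in>UNIV. of_int (k $ i) * (\<theta> + t *\<^sub>R axis j 1) $ i)
      = (\<Sum>i\<in>UNIV. of_int (k $ i) * \<theta> $ i + (if i = j then t * of_int (k $ j) else 0))"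
    by (intro sum.cong) (auto simp: axis_def algebra_simps)
  also have "\<dots> = (\<Sum>i\<in>UNIV. of_int (k $ i) * \<theta> $ i) + t * of_int (k $ j)"
    by (simp add: sum.distrib)
  finally show ?thesis
    unfolding echar_def by (simp add: algebra_simps)
qed

lemma partialD_trig:
  assumes E: "finite E"
  shows "partialD (trig E c) j \<theta> = trig E (\<lambda>k. c k * (\<i> * of_int (k $ j))) \<theta>"
proof -
  let ?a = "\<lambda>k. of_real (\<Sum>i\<in>UNIV. of_int (k $ i) * \<theta> $ i) :: complex"
  have "((\<lambda>t. c k * exp (\<i> * (?a k + of_real t * of_int (k $ j)))) has_vector_derivative
      c k * (\<i> * of_int (k $ j)) * echar k \<theta>) (at 0)" for k
  proof -
    have "((\<lambda>z. c k * exp (\<i> * (?a k + z * of_int (k $ j)))) has_field_derivative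
        c k * (\<i> * of_int (k $ j)) * echar k \<theta>) (at (of_real 0))"
      by (rule derivative_eq_intros refl | simp)+ (simp add: echar_def mult_ac)
    from has_vector_derivative_real_field[OF this] show ?thesis by simp
  qed
  then have "((\<lambda>t. trig E c (\<theta> + t *\<^sub>R axis j 1)) has_vector_derivative
      trig E (\<lambda>k. c k * (\<i> * of_int (k $ j))) \<theta>) (at 0)"
    unfolding trig_def echar_shift_axis by (intro has_vector_derivative_sum) (simp add: mult.assoc)
  then show ?thesis
    unfolding partialD_def by (rule vector_derivative_at)
qed

lemma tavg_gradnorm2_trig:
  assumes E: "finite E"
  shows "tavg (gradnorm2 (trig E c)) = (\<Sum>k\<in>E. cmod (c k) ^ 2 * (\<Sum>j\<in>UNIV. (real_of_int (k $ j))\<^sup>2))"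
proof -
  have "tavg (gradnorm2 (trig E c))
      = tavg (\<lambda>\<theta>. \<Sum>j\<in>UNIV. cmod (trig E (\<lambda>k. c k * (\<i> * of_int (k $ j))) \<theta>) ^ 2)"
    unfolding gradnorm2_def partialD_trig[OF E] ..
  also have "\<dots> = (\<Sum>j\<in>UNIV. tavg (\<lambda>\<theta>. cmod (trig E (\<lambda>k. c k * (\<i> * of_int (k $ j))) \<theta>) ^ 2))"
    by (rule tavg_sum) (auto intro!: continuous_intros)
  also have "\<dots> = (\<Sum>k\<in>E. cmod (c k) ^ 2 * (\<Sum>j\<in>UNIV. (real_of_int (k $ j))\<^sup>2))"
    unfolding tavg_norm_trig_squared[OF E]
    by (simp add: norm_mult power_mult_distrib sum_distrib_left mult_ac sum.swap[of _ UNIV E])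
  finally show ?thesis .
qed

section \<open>Dyadic blocks\<close>

text \<open>\<open>block_weight J\<close> is the least value of \<open>|k|^2\<close> over \<open>k \<in> \<Delta>(J)\<close>.\<close>

definition block_weight :: "nat^'n \<Rightarrow> real" where
  "block_weight J = (\<Sum>i\<in>UNIV. 4 ^ (J $ i - 1))"

lemma block_weight_pos: "0 < block_weight J"
  unfolding block_weight_def by (intro sum_pos) auto

lemma Delta1_lower: "k \<in> Delta1 j \<Longrightarrow> 2 ^ (j - 1) \<le> k"
  unfolding Delta1_def by simp

lemma card_Delta1_le: "card (Delta1 j) \<le> 2 ^ (j - 1)"
proof -
  have "(2::int) ^ j \<le> 2 * 2 ^ (j - 1)"
    by (cases j) simp_all
  then show ?thesis
    unfolding Delta1_def by (simp add: nat_le_iff)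
qed

lemma DeltaJ_subset_PiE: "DeltaJ J \<subseteq> (\<lambda>f. \<chi> i. f i) ` PiE UNIV (\<lambda>i. Delta1 (J $ i))"
proof
  fix k assume "k \<in> DeltaJ J"
  then have "(\<lambda>i. k $ i) \<in> PiE UNIV (\<lambda>i. Delta1 (J $ i))"
    by (auto simp: DeltaJ_def)
  then show "k \<in> (\<lambda>f. \<chi> i. f i) ` PiE UNIV (\<lambda>i. Delta1 (J $ i))"
    by (intro image_eqI[of _ _ "\<lambda>i. k $ i"]) auto
qed

lemma finite_PiE_Delta1: "finite (PiE UNIV (\<lambda>i. Delta1 (J $ i)))"
  by (intro finite_PiE) (auto simp: Delta1_def)

lemma finite_DeltaJ: "finite (DeltaJ J)"
  using DeltaJ_subset_PiE finite_PiE_Delta1 by (rule finite_subset[OF _ finite_imageI])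

lemma card_DeltaJ_le: "card (DeltaJ J) \<le> (\<Prod>i\<in>UNIV. 2 ^ (J $ i - 1))"
proof -
  have "card (DeltaJ J) \<le> card ((\<lambda>f. \<chi> i. f i) ` PiE UNIV (\<lambda>i. Delta1 (J $ i)))"
    by (rule card_mono[OF finite_imageI[OF finite_PiE_Delta1] DeltaJ_subset_PiE])
  also have "\<dots> \<le> card (PiE UNIV (\<lambda>i. Delta1 (J $ i)))"
    by (rule card_image_le[OF finite_PiE_Delta1])
  also have "\<dots> = (\<Prod>i\<in>UNIV. card (Delta1 (J $ i)))"
    by (simp add: card_PiE)
  also have "\<dots> \<le> (\<Prod>i\<in>UNIV. 2 ^ (J $ i - 1))"
    using card_Delta1_le by (auto intro!: prod_mono)
  finally show ?thesis .
qed

lemma DeltaJ_nonempty: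
  assumes "\<forall>i. 1 \<le> J $ i"
  shows "DeltaJ J \<noteq> {}"
proof -
  have "(2::int) ^ j = 2 * 2 ^ (j - 1)" if "1 \<le> j" for j
    using that by (cases j) simp_all
  then have "(\<chi> i. 2 ^ (J $ i - 1)) \<in> DeltaJ J"
    unfolding DeltaJ_def Delta1_def using assms by auto
  then show ?thesis by blast
qed

lemma block_weight_le_sum_squares:
  assumes "k \<in> DeltaJ J"
  shows "block_weight J \<le> (\<Sum>j\<in>UNIV. (real_of_int (k $ j))\<^sup>2)"
  unfolding block_weight_def
proof (rule sum_mono)
  fix j
  have "k $ j \<in> Delta1 (J $ j)"
    using assms unfolding DeltaJ_def by simp
  then have "2 ^ (J $ j - 1) \<le> k $ j"
    by (rule Delta1_lower)
  then have "(2::real) ^ (J $ j - 1) \<le> real_of_int (k $ j)"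
    by (metis of_int_le_iff of_int_numeral of_int_power)
  then have "((2::real) ^ (J $ j - 1))\<^sup>2 \<le> (real_of_int (k $ j))\<^sup>2"
    by (intro power_mono) auto
  then show "4 ^ (J $ j - 1) \<le> (real_of_int (k $ j))\<^sup>2"
    by (simp add: power2_eq_square power_mult_distrib[symmetric])
qed

text \<open>\<open>#\<Delta>(J)^(2/D) \<le> (\<Prod>\<^sub>i 4^(J\<^sub>i - 1))^(1/D)\<close>, a geometric mean of the summands of \<open>block_weight J\<close>.\<close>

lemma card_DeltaJ_powr_le_block_weight:
  "real (card (DeltaJ (J::nat^'n))) powr (2 / CARD('n)) \<le> block_weight J"
proof -
  define D where "D = real CARD('n)"
  define M where "M = block_weight J"
  define Q where "Q = (\<Prod>i\<in>UNIV. (2::real) ^ (J $ i - 1))"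
  have D: "1 \<le> D" unfolding D_def by simp
  have Q: "0 < Q" unfolding Q_def by (simp add: prod_pos)
  have "real (card (DeltaJ J)) \<le> real (\<Prod>i\<in>UNIV. 2 ^ (J $ i - 1))"
    by (simp only: of_nat_le_iff card_DeltaJ_le)
  then have "real (card (DeltaJ J)) \<le> Q"
    by (simp add: Q_def)
  then have "real (card (DeltaJ J)) powr (2 / D) \<le> Q powr (2 / D)"
    using D by (intro powr_mono2) auto
  also have "\<dots> = (Q ^ 2) powr (1 / D)"
    using Q by (simp add: power2_eq_square powr_mult powr_add[symmetric])
  also have "\<dots> \<le> (M ^ CARD('n)) powr (1 / D)"
  proof (rule powr_mono2)
    have "Q ^ 2 = (\<Prod>i\<in>UNIV. (4::real) ^ (J $ i - 1))"
      unfolding Q_def prod_power_distrib by (simp add: power2_eq_square power_mult_distrib[symmetric])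
    also have "\<dots> \<le> (\<Prod>i\<in>(UNIV::'n set). M)"
      by (intro prod_mono) (auto simp: M_def block_weight_def intro!: member_le_sum)
    finally show "Q ^ 2 \<le> M ^ CARD('n)" by simp
  qed (use D in auto)
  also have "\<dots> = M"
    using block_weight_pos[of J] unfolding M_def D_def by (simp add: powr_realpow[symmetric] powr_powr)
  finally show ?thesis unfolding D_def M_def .
qed

text \<open>Here the restriction \<open>p \<le> 2 + 4/D\<close> enters: \<open>(p-2)/2 \<le> 2/D\<close>.\<close>

lemma sqrt_mult_powr_le:
  fixes p D C N M :: real
  assumes p: "2 \<le> p" "p \<le> 2 + 4 / D" and D: "1 \<le> D" and C: "1 \<le> C" and N: "1 \<le> N"
    and CM: "C powr (2 / D) \<le> M"
  shows "sqrt (C * N) powr (p - 2) \<le> M * N ^ 2"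
proof -
  have CN: "1 \<le> C * N"
    using C N mult_mono[of 1 C 1 N] by simp
  have "sqrt (C * N) powr (p - 2) = (C * N) powr ((p - 2) / 2)"
    using CN by (simp add: sqrt_def root_powr_inverse powr_powr)
  also have "\<dots> \<le> (C * N) powr (2 / D)"
    using p CN D by (intro powr_mono) (auto simp: field_simps)
  also have "\<dots> = C powr (2 / D) * N powr (2 / D)"
    using C N by (simp add: powr_mult)
  also have "\<dots> \<le> M * N powr 2"
  proof (rule mult_mono)
    show "N powr (2 / D) \<le> N powr 2"
      using N D by (intro powr_mono) (auto simp: field_simps)
  qed (use CM order_trans[OF powr_ge_zero CM] in auto)
  finally show ?thesis
    using N by (simp add: powr_realpow)
qed

section \<open>Derivatives of \<open>t \<mapsto> |a + t b|\<^sup>p\<close>\<close>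

text \<open>First and second \<open>t\<close>-derivatives of \<open>(|a + t b|^2)^s\<close>, written at \<open>z = a + t b\<close> with \<open>w = b\<close>.\<close>

definition sqnorm_powr_deriv :: "real \<Rightarrow> complex \<Rightarrow> complex \<Rightarrow> real" where
  "sqnorm_powr_deriv s z w = s * (cmod z ^ 2) powr (s - 1) * (2 * Re (cnj z * w))"

definition sqnorm_powr_deriv2 :: "real \<Rightarrow> complex \<Rightarrow> complex \<Rightarrow> real" where
  "sqnorm_powr_deriv2 s z w = s * (s - 1) * (cmod z ^ 2) powr (s - 2) * (2 * Re (cnj z * w))^2
     + s * (cmod z ^ 2) powr (s - 1) * (2 * cmod w ^ 2)"

lemma norm_add_scaled_squared:
  "cmod (a + of_real t * b) ^ 2 = cmod a ^ 2 + 2 * t * Re (cnj a * b) + t^2 * cmod b ^ 2"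
  unfolding cmod_power2 by (simp add: power2_eq_square algebra_simps)

lemma Re_cnj_add_scaled:
  "2 * Re (cnj (a + of_real t * b) * b) = 2 * Re (cnj a * b) + 2 * t * cmod b ^ 2"
  unfolding cmod_power2 by (simp add: power2_eq_square algebra_simps)

lemma has_real_derivative_norm_add_scaled_squared:
  "((\<lambda>t. cmod (a + of_real t * b) ^ 2) has_real_derivative 2 * Re (cnj (a + of_real t * b) * b)) (at t)"
  unfolding norm_add_scaled_squared Re_cnj_add_scaled
  by (rule derivative_eq_intros refl | simp)+

lemma has_real_derivative_Re_cnj_add_scaled:
  "((\<lambda>t. 2 * Re (cnj (a + of_real t * b) * b)) has_real_derivative 2 * cmod b ^ 2) (at t)"
  unfolding Re_cnj_add_scaled
  by (rule derivative_eq_intros refl | simp)+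

lemma powr_eq_powr_minus_one_mult: "0 \<le> (x::real) \<Longrightarrow> x powr s = x powr (s - 1) * x"
  by (cases "x = 0") (simp_all add: powr_diff)

text \<open>
  Away from the zeros of \<open>a + t b\<close> these are the chain rule; at a zero the difference
  quotient is \<open>O(|h|^(2s-1))\<close> resp. \<open>O(|h|^(2s-2))\<close>, which tends to \<open>0\<close> because \<open>s > 1\<close>.
\<close>

lemma has_real_derivative_sqnorm_powr:
  assumes s: "s > 1"
  shows "((\<lambda>t. (cmod (a + of_real t * b) ^ 2) powr s) has_real_derivative
    sqnorm_powr_deriv s (a + of_real t * b) b) (at t)"
proof (cases "a + of_real t * b = 0")
  case False
  then have "cmod (a + of_real t * b) ^ 2 > 0" by simp
  from DERIV_fun_powr[OF has_real_derivative_norm_add_scaled_squared this, of s] show ?thesis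
    by (simp add: sqnorm_powr_deriv_def mult_ac)
next
  case zero: True
  have shift_pt: "a + of_real (t + h) * b = of_real h * b" for h
    using zero by (simp add: algebra_simps)
  have shift: "cmod (a + of_real (t + h) * b) ^ 2 = h^2 * cmod b ^ 2" for h
    unfolding shift_pt by (simp add: norm_mult power_mult_distrib)
  have "\<forall>\<^sub>F h in at 0. ((cmod (a + of_real (t + h) * b) ^ 2) powr s - (cmod (a + of_real t * b) ^ 2) powr s) / h
      = (h^2 * cmod b ^ 2) powr (s - 1) * h * cmod b ^ 2"
  proof (rule eventually_mono[OF eventually_neq_at_within[of 0 0]])
    fix h :: real assume "h \<noteq> 0"
    then show "((cmod (a + of_real (t + h) * b) ^ 2) powr s - (cmod (a + of_real t * b) ^ 2) powr s) / h
      = (h^2 * cmod b ^ 2) powr (s - 1) * h * cmod b ^ 2"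
      unfolding shift using zero powr_eq_powr_minus_one_mult[of "h^2 * cmod b ^ 2" s]
      by (simp add: power2_eq_square)
  qed
  moreover have "((\<lambda>h. (h^2 * cmod b ^ 2) powr (s - 1) * h * cmod b ^ 2) \<longlongrightarrow>
      (0^2 * cmod b ^ 2) powr (s - 1) * 0 * cmod b ^ 2) (at 0)"
    using s by (intro tendsto_intros) auto
  ultimately have "(\<lambda>h. ((cmod (a + of_real (t + h) * b) ^ 2) powr s
      - (cmod (a + of_real t * b) ^ 2) powr s) / h) \<midarrow>0\<rightarrow> 0"
    using tendsto_cong by fastforce
  then show ?thesis
    using zero by (simp add: DERIV_def sqnorm_powr_deriv_def)
qed

lemma has_real_derivative_sqnorm_powr_deriv:
  assumes s: "s > 1"
  shows "((\<lambda>t. sqnorm_powr_deriv s (a + of_real t * b) b) has_real_derivative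
    sqnorm_powr_deriv2 s (a + of_real t * b) b) (at t)"
proof (cases "a + of_real t * b = 0")
  case False
  then have pos: "cmod (a + of_real t * b) ^ 2 > 0" by simp
  have "DERIV (\<lambda>t. s * (cmod (a + of_real t * b) ^ 2) powr (s - 1) * (2 * Re (cnj (a + of_real t * b) * b))) t :>
     s * ((s - 1) * (cmod (a + of_real t * b) ^ 2) powr (s - 1 - of_nat 1) * (2 * Re (cnj (a + of_real t * b) * b)))
       * (2 * Re (cnj (a + of_real t * b) * b)) + 2 * cmod b ^ 2 * (s * (cmod (a + of_real t * b) ^ 2) powr (s - 1))"
    by (intro DERIV_mult DERIV_cmult DERIV_fun_powr[OF has_real_derivative_norm_add_scaled_squared pos]
        has_real_derivative_Re_cnj_add_scaled)
  then show ?thesis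
    by (simp add: sqnorm_powr_deriv_def sqnorm_powr_deriv2_def power2_eq_square algebra_simps)
next
  case zero: True
  have shift_pt: "a + of_real (t + h) * b = of_real h * b" for h
    using zero by (simp add: algebra_simps)
  have shift: "cmod (a + of_real (t + h) * b) ^ 2 = h^2 * cmod b ^ 2"
    "Re (cnj (a + of_real (t + h) * b) * b) = h * cmod b ^ 2" for h
    unfolding shift_pt cmod_power2 by (simp_all add: norm_mult power_mult_distrib power2_eq_square algebra_simps)
  have "\<forall>\<^sub>F h in at 0. (sqnorm_powr_deriv s (a + of_real (t + h) * b) b - sqnorm_powr_deriv s (a + of_real t * b) b) / h
      = s * (h^2 * cmod b ^ 2) powr (s - 1) * (2 * cmod b ^ 2)"
  proof (rule eventually_mono[OF eventually_neq_at_within[of 0 0]])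
    fix h :: real assume "h \<noteq> 0"
    then show "(sqnorm_powr_deriv s (a + of_real (t + h) * b) b - sqnorm_powr_deriv s (a + of_real t * b) b) / h
      = s * (h^2 * cmod b ^ 2) powr (s - 1) * (2 * cmod b ^ 2)"
      unfolding sqnorm_powr_deriv_def shift zero by simp
  qed
  moreover have "((\<lambda>h. s * (h^2 * cmod b ^ 2) powr (s - 1) * (2 * cmod b ^ 2)) \<longlongrightarrow>
      s * (0^2 * cmod b ^ 2) powr (s - 1) * (2 * cmod b ^ 2)) (at 0)"
    using s by (intro tendsto_intros) auto
  ultimately have "(\<lambda>h. (sqnorm_powr_deriv s (a + of_real (t + h) * b) b
      - sqnorm_powr_deriv s (a + of_real t * b) b) / h) \<midarrow>0\<rightarrow> 0"
    using tendsto_cong by fastforce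
  then show ?thesis
    using zero by (simp add: DERIV_def sqnorm_powr_deriv_def sqnorm_powr_deriv2_def)
qed

lemma continuous_on_sqnorm_powr_deriv:
  assumes "s > 1" "continuous_on S f" "continuous_on S g"
  shows "continuous_on S (\<lambda>x. sqnorm_powr_deriv s (f x) (g x))"
  unfolding sqnorm_powr_deriv_def using assms
  by (intro continuous_intros continuous_on_powr') auto

lemma abs_sqnorm_powr_cross_term_le:
  assumes "s > 1"
  shows "\<bar>(cmod z ^ 2) powr (s - 2) * (2 * Re (cnj z * w))^2\<bar> \<le> 4 * cmod w ^ 2 * (cmod z ^ 2) powr (s - 1)"
proof -
  have "\<bar>Re (cnj z * w)\<bar> \<le> cmod z * cmod w"
    using abs_Re_le_cmod[of "cnj z * w"] by (simp add: norm_mult)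
  then have "\<bar>Re (cnj z * w)\<bar>^2 \<le> (cmod z * cmod w)^2"
    by (intro power_mono) auto
  then have Re_sq: "(Re (cnj z * w))^2 \<le> cmod z ^ 2 * cmod w ^ 2"
    by (simp add: power_mult_distrib)
  have "\<bar>(cmod z ^ 2) powr (s - 2) * (2 * Re (cnj z * w))^2\<bar> = (cmod z ^ 2) powr (s - 2) * (4 * (Re (cnj z * w))^2)"
    unfolding power_mult_distrib by simp
  also have "\<dots> \<le> (cmod z ^ 2) powr (s - 2) * (4 * (cmod z ^ 2 * cmod w ^ 2))"
    using Re_sq by (intro mult_left_mono) auto
  also have "\<dots> = 4 * cmod w ^ 2 * ((cmod z ^ 2) powr (s - 2) * cmod z ^ 2)"
    by (simp add: algebra_simps)
  also have "\<dots> = 4 * cmod w ^ 2 * (cmod z ^ 2) powr (s - 1)"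
    using powr_eq_powr_minus_one_mult[of "cmod z ^ 2" "s - 1"] by simp
  finally show ?thesis .
qed

lemma continuous_on_sqnorm_powr_cross_term:
  fixes f g :: "'a::t2_space \<Rightarrow> complex"
  assumes s: "s > 1" and f: "continuous_on S f" and g: "continuous_on S g"
  shows "continuous_on S (\<lambda>x. (cmod (f x) ^ 2) powr (s - 2) * (2 * Re (cnj (f x) * g x))^2)"
proof (rule continuous_on_eq_continuous_within[THEN iffD2], rule ballI)
  fix x assume x: "x \<in> S"
  have fx: "continuous (at x within S) f" and gx: "continuous (at x within S) g"
    using f g x by (auto simp: continuous_on_eq_continuous_within)
  show "continuous (at x within S) (\<lambda>x. (cmod (f x) ^ 2) powr (s - 2) * (2 * Re (cnj (f x) * g x))^2)"
  proof (cases "f x = 0")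
    case False
    then show ?thesis using fx gx by (intro continuous_intros) (auto intro!: continuous_intros)
  next
    case True
    have lim: "((\<lambda>y. 4 * cmod (g y) ^ 2 * (cmod (f y) ^ 2) powr (s - 1)) \<longlongrightarrow>
        4 * cmod (g x) ^ 2 * (cmod (f x) ^ 2) powr (s - 1)) (at x within S)"
      using fx gx s unfolding continuous_within by (intro tendsto_intros) auto
    have "((\<lambda>y. (cmod (f y) ^ 2) powr (s - 2) * (2 * Re (cnj (f y) * g y))^2) \<longlongrightarrow> 0) (at x within S)"
      using abs_sqnorm_powr_cross_term_le[OF s]
      by (intro Lim_null_comparison[OF _ lim[unfolded True, simplified]]) (simp add: always_eventually)
    then show ?thesis using True by (simp add: continuous_within)
  qed
qed

lemma continuous_on_sqnorm_powr_deriv2: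
  fixes f g :: "'a::t2_space \<Rightarrow> complex"
  assumes "s > 1" "continuous_on S f" "continuous_on S g"
  shows "continuous_on S (\<lambda>x. sqnorm_powr_deriv2 s (f x) (g x))"
proof -
  have "continuous_on S (\<lambda>x. s * (s - 1) * ((cmod (f x) ^ 2) powr (s - 2) * (2 * Re (cnj (f x) * g x))^2)
     + s * (cmod (f x) ^ 2) powr (s - 1) * (2 * cmod (g x) ^ 2))"
    using assms by (intro continuous_intros continuous_on_powr' continuous_on_sqnorm_powr_cross_term) auto
  then show ?thesis unfolding sqnorm_powr_deriv2_def by (simp add: mult_ac)
qed

lemma sqnorm_powr_deriv2_le:
  assumes s: "s > 1" and zS: "cmod z \<le> S"
  shows "sqnorm_powr_deriv2 s z w \<le> 2 * s * (2 * s - 1) * (S ^ 2) powr (s - 1) * cmod w ^ 2"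
proof -
  have "sqnorm_powr_deriv2 s z w
      \<le> s * (s - 1) * (4 * cmod w ^ 2 * (cmod z ^ 2) powr (s - 1)) + s * (cmod z ^ 2) powr (s - 1) * (2 * cmod w ^ 2)"
    unfolding sqnorm_powr_deriv2_def using abs_sqnorm_powr_cross_term_le[OF s, of z w] s
    by (intro add_mono mult_left_mono) (auto simp: mult.assoc)
  also have "\<dots> = 2 * s * (2 * s - 1) * (cmod z ^ 2) powr (s - 1) * cmod w ^ 2"
    by (simp add: algebra_simps)
  also have "\<dots> \<le> 2 * s * (2 * s - 1) * (S ^ 2) powr (s - 1) * cmod w ^ 2"
    using s zS by (intro mult_right_mono mult_left_mono powr_mono2 power_mono) auto
  finally show ?thesis .
qed

text \<open>Since \<open>0 powr 0 = 0\<close>, the exponent \<open>p = 2\<close>, where \<open>s = p/2 = 1\<close>, is treated separately.\<close>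

definition norm_powr_deriv :: "real \<Rightarrow> complex \<Rightarrow> complex \<Rightarrow> real" where
  "norm_powr_deriv p z w = (if p = 2 then 2 * Re (cnj z * w) else sqnorm_powr_deriv (p / 2) z w)"

definition norm_powr_deriv2 :: "real \<Rightarrow> complex \<Rightarrow> complex \<Rightarrow> real" where
  "norm_powr_deriv2 p z w = (if p = 2 then 2 * cmod w ^ 2 else sqnorm_powr_deriv2 (p / 2) z w)"

lemma norm_powr_eq_sqnorm_powr:
  assumes "p \<ge> 2"
  shows "cmod z powr p = (if p = 2 then cmod z ^ 2 else (cmod z ^ 2) powr (p / 2))"
proof (cases "z = 0")
  case False
  then have "cmod z ^ 2 = cmod z powr 2"
    by (simp add: powr_realpow)
  then have "(cmod z ^ 2) powr (p / 2) = cmod z powr p"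
    by (simp only: powr_powr) simp
  then show ?thesis using False by simp
qed (use assms in simp)

lemma has_real_derivative_norm_powr:
  assumes p: "p \<ge> 2"
  shows "((\<lambda>t. cmod (a + of_real t * b) powr p) has_real_derivative norm_powr_deriv p (a + of_real t * b) b) (at t)"
proof (cases "p = 2")
  case True
  then show ?thesis
    unfolding norm_powr_deriv_def
    using has_real_derivative_norm_add_scaled_squared[of a b t] by (simp add: norm_powr_eq_sqnorm_powr)
next
  case False
  with p have "p / 2 > 1" by simp
  from has_real_derivative_sqnorm_powr[OF this] show ?thesis
    unfolding norm_powr_deriv_def norm_powr_eq_sqnorm_powr[OF p] using False by simp
qed

lemma has_real_derivative_norm_powr_deriv:
  assumes p: "p \<ge> 2"
  shows "((\<lambda>t. norm_powr_deriv p (a + of_real t * b) b) has_real_derivative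
    norm_powr_deriv2 p (a + of_real t * b) b) (at t)"
proof (cases "p = 2")
  case True
  then show ?thesis
    unfolding norm_powr_deriv_def norm_powr_deriv2_def using has_real_derivative_Re_cnj_add_scaled by simp
next
  case False
  with p have "p / 2 > 1" by simp
  from has_real_derivative_sqnorm_powr_deriv[OF this] show ?thesis
    unfolding norm_powr_deriv_def norm_powr_deriv2_def using False by simp
qed

lemma continuous_on_norm_powr_deriv:
  assumes p: "p \<ge> 2" and f: "continuous_on S f" and g: "continuous_on S g"
  shows "continuous_on S (\<lambda>x. norm_powr_deriv p (f x) (g x))"
proof (cases "p = 2")
  case True
  then show ?thesis
    unfolding norm_powr_deriv_def using f g by (simp; intro continuous_intros)
next
  case False
  with p have "p / 2 > 1" by simp
  from continuous_on_sqnorm_powr_deriv[OF this f g] show ?thesis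
    unfolding norm_powr_deriv_def using False by simp
qed

lemma continuous_on_norm_powr_deriv2:
  fixes f g :: "'a::t2_space \<Rightarrow> complex"
  assumes p: "p \<ge> 2" and f: "continuous_on S f" and g: "continuous_on S g"
  shows "continuous_on S (\<lambda>x. norm_powr_deriv2 p (f x) (g x))"
proof (cases "p = 2")
  case True
  then show ?thesis
    unfolding norm_powr_deriv2_def using f g by (simp; intro continuous_intros)
next
  case False
  with p have "p / 2 > 1" by simp
  from continuous_on_sqnorm_powr_deriv2[OF this f g] show ?thesis
    unfolding norm_powr_deriv2_def using False by simp
qed

lemma norm_powr_deriv2_le:
  assumes p: "p \<ge> 2" and zS: "cmod z \<le> S" and S: "0 < S"
  shows "norm_powr_deriv2 p z w \<le> p * (p - 1) * S powr (p - 2) * cmod w ^ 2"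
proof (cases "p = 2")
  case True
  then show ?thesis unfolding norm_powr_deriv2_def using S by simp
next
  case False
  with p have s: "p / 2 > 1" by simp
  have "(S ^ 2) powr (p / 2 - 1) = S powr (p / 2 - 1) * S powr (p / 2 - 1)"
    using S by (simp add: power2_eq_square powr_mult)
  also have "\<dots> = S powr (p - 2)"
    by (simp add: powr_add[symmetric])
  finally have "(S ^ 2) powr (p / 2 - 1) = S powr (p - 2)" .
  then show ?thesis
    using sqnorm_powr_deriv2_le[OF s zS, of w] False unfolding norm_powr_deriv2_def by simp
qed

section \<open>The second variation of the Hamiltonian\<close>

lemma PJ_add_scaled:
  assumes "L2T u" "L2T v"
  shows "PJ J (\<lambda>\<theta>. u \<theta> + of_real t * v \<theta>) = trig (DeltaJ J) (\<lambda>k. fcoeff u k + of_real t * fcoeff v k)"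
proof -
  have "fcoeff (\<lambda>\<theta>. u \<theta> + of_real t * v \<theta>) = (\<lambda>k. fcoeff u k + of_real t * fcoeff v k)"
    by (rule ext) (rule fcoeff_add_scaled[OF assms])
  then show ?thesis by (simp add: PJ_eq_trig)
qed

lemma partialD_PJ:
  "partialD (PJ J u) j = trig (DeltaJ J) (\<lambda>k. fcoeff u k * (\<i> * of_int (k $ j)))"
  unfolding PJ_eq_trig by (rule ext) (rule partialD_trig[OF finite_DeltaJ])

lemma continuous_on_PJ_comp [continuous_intros]:
  "continuous_on S f \<Longrightarrow> continuous_on S (\<lambda>x. PJ J u (f x))"
  unfolding PJ_eq_trig by (rule continuous_on_trig_comp)

lemma continuous_on_partialD_PJ_comp [continuous_intros]:
  "continuous_on S f \<Longrightarrow> continuous_on S (\<lambda>x. partialD (PJ J u) j (f x))"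
  unfolding partialD_PJ by (rule continuous_on_trig_comp)

lemma gradnorm2_PJ_add_scaled:
  assumes "L2T u" "L2T v"
  shows "gradnorm2 (PJ J (\<lambda>\<theta>. u \<theta> + of_real t * v \<theta>)) \<theta>
    = (\<Sum>j\<in>UNIV. cmod (partialD (PJ J u) j \<theta> + of_real t * partialD (PJ J v) j \<theta>) ^ 2)"
  unfolding gradnorm2_def PJ_add_scaled[OF assms] partialD_trig[OF finite_DeltaJ] partialD_PJ
    trig_add_scaled
  by (simp add: algebra_simps)

lemma tavg_sum_norm_add_scaled_squared_derivs:
  fixes A B :: "'j::finite \<Rightarrow> real^'n \<Rightarrow> complex"
  assumes A: "\<And>j. continuous_on UNIV (A j)" and B: "\<And>j. continuous_on UNIV (B j)"
  shows "((\<lambda>t. tavg (\<lambda>\<theta>. \<Sum>j\<in>UNIV. cmod (A j \<theta> + of_real t * B j \<theta>) ^ 2)) has_real_derivative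
      tavg (\<lambda>\<theta>. \<Sum>j\<in>UNIV. 2 * Re (cnj (A j \<theta> + of_real t * B j \<theta>) * B j \<theta>))) (at t)"
    and "((\<lambda>t. tavg (\<lambda>\<theta>. \<Sum>j\<in>UNIV. 2 * Re (cnj (A j \<theta> + of_real t * B j \<theta>) * B j \<theta>))) has_real_derivative
      tavg (\<lambda>\<theta>. \<Sum>j\<in>UNIV. 2 * cmod (B j \<theta>) ^ 2)) (at t)"
proof -
  have A': "continuous_on S (\<lambda>x. A j (f x))" and B': "continuous_on S (\<lambda>x. B j (f x))"
    if "continuous_on S f" for S f j
    using continuous_on_compose2[OF A that] continuous_on_compose2[OF B that] by auto
  note [continuous_intros] = A' B'
  show "((\<lambda>t. tavg (\<lambda>\<theta>. \<Sum>j\<in>UNIV. cmod (A j \<theta> + of_real t * B j \<theta>) ^ 2)) has_real_derivative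
      tavg (\<lambda>\<theta>. \<Sum>j\<in>UNIV. 2 * Re (cnj (A j \<theta> + of_real t * B j \<theta>) * B j \<theta>))) (at t)"
  proof (rule tavg_has_real_derivative)
    show "((\<lambda>t. \<Sum>j\<in>UNIV. cmod (A j \<theta> + of_real t * B j \<theta>) ^ 2) has_real_derivative
        (\<Sum>j\<in>UNIV. 2 * Re (cnj (A j \<theta> + of_real t * B j \<theta>) * B j \<theta>))) (at t)" for t \<theta>
      by (intro DERIV_sum has_real_derivative_norm_add_scaled_squared)
    show "continuous_on torus_box (\<lambda>\<theta>. \<Sum>j\<in>UNIV. cmod (A j \<theta> + of_real t * B j \<theta>) ^ 2)" for t
      by (intro continuous_intros)
    show "continuous_on (UNIV \<times> torus_box)
        (\<lambda>(t, \<theta>). \<Sum>j\<in>UNIV. 2 * Re (cnj (A j \<theta> + of_real t * B j \<theta>) * B j \<theta>))"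
      unfolding case_prod_beta by (intro continuous_intros)
  qed
  show "((\<lambda>t. tavg (\<lambda>\<theta>. \<Sum>j\<in>UNIV. 2 * Re (cnj (A j \<theta> + of_real t * B j \<theta>) * B j \<theta>))) has_real_derivative
      tavg (\<lambda>\<theta>. \<Sum>j\<in>UNIV. 2 * cmod (B j \<theta>) ^ 2)) (at t)"
  proof (rule tavg_has_real_derivative)
    show "((\<lambda>t. \<Sum>j\<in>UNIV. 2 * Re (cnj (A j \<theta> + of_real t * B j \<theta>) * B j \<theta>)) has_real_derivative
        (\<Sum>j\<in>UNIV. 2 * cmod (B j \<theta>) ^ 2)) (at t)" for t \<theta>
      by (intro DERIV_sum has_real_derivative_Re_cnj_add_scaled)
    show "continuous_on torus_box (\<lambda>\<theta>. \<Sum>j\<in>UNIV. 2 * Re (cnj (A j \<theta> + of_real t * B j \<theta>) * B j \<theta>))" for t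
      by (intro continuous_intros)
    show "continuous_on (UNIV \<times> torus_box) (\<lambda>(t, \<theta>). \<Sum>j\<in>UNIV. 2 * cmod (B j \<theta>) ^ 2)"
      unfolding case_prod_beta by (intro continuous_intros)
  qed
qed

lemma tavg_norm_powr_add_scaled_derivs:
  fixes a b :: "real^'n \<Rightarrow> complex"
  assumes p: "p \<ge> 2" and a: "continuous_on UNIV a" and b: "continuous_on UNIV b"
  shows "((\<lambda>t. tavg (\<lambda>\<theta>. cmod (a \<theta> + of_real t * b \<theta>) powr p)) has_real_derivative
      tavg (\<lambda>\<theta>. norm_powr_deriv p (a \<theta> + of_real t * b \<theta>) (b \<theta>))) (at t)"
    and "((\<lambda>t. tavg (\<lambda>\<theta>. norm_powr_deriv p (a \<theta> + of_real t * b \<theta>) (b \<theta>))) has_real_derivative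
      tavg (\<lambda>\<theta>. norm_powr_deriv2 p (a \<theta> + of_real t * b \<theta>) (b \<theta>))) (at t)"
proof -
  have a': "continuous_on S (\<lambda>x. a (f x))" and b': "continuous_on S (\<lambda>x. b (f x))"
    if "continuous_on S f" for S f
    using continuous_on_compose2[OF a that] continuous_on_compose2[OF b that] by auto
  note [continuous_intros] = a' b'
  have line: "continuous_on S (\<lambda>x. a (snd x) + of_real (fst x) * b (snd x))"
    and dir: "continuous_on S (\<lambda>x. b (snd x))" for S :: "(real \<times> (real^'n)) set"
    by (intro continuous_intros)+
  show "((\<lambda>t. tavg (\<lambda>\<theta>. cmod (a \<theta> + of_real t * b \<theta>) powr p)) has_real_derivative
      tavg (\<lambda>\<theta>. norm_powr_deriv p (a \<theta> + of_real t * b \<theta>) (b \<theta>))) (at t)"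
  proof (rule tavg_has_real_derivative)
    show "continuous_on torus_box (\<lambda>\<theta>. cmod (a \<theta> + of_real t * b \<theta>) powr p)" for t
      using p by (intro continuous_on_powr' continuous_intros) auto
    show "continuous_on (UNIV \<times> torus_box) (\<lambda>(t, \<theta>). norm_powr_deriv p (a \<theta> + of_real t * b \<theta>) (b \<theta>))"
      unfolding case_prod_beta by (rule continuous_on_norm_powr_deriv[OF p line dir])
  qed (rule has_real_derivative_norm_powr[OF p])
  show "((\<lambda>t. tavg (\<lambda>\<theta>. norm_powr_deriv p (a \<theta> + of_real t * b \<theta>) (b \<theta>))) has_real_derivative
      tavg (\<lambda>\<theta>. norm_powr_deriv2 p (a \<theta> + of_real t * b \<theta>) (b \<theta>))) (at t)"
  proof (rule tavg_has_real_derivative)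
    show "continuous_on torus_box (\<lambda>\<theta>. norm_powr_deriv p (a \<theta> + of_real t * b \<theta>) (b \<theta>))" for t
      by (intro continuous_on_norm_powr_deriv[OF p] continuous_intros)
    show "continuous_on (UNIV \<times> torus_box) (\<lambda>(t, \<theta>). norm_powr_deriv2 p (a \<theta> + of_real t * b \<theta>) (b \<theta>))"
      unfolding case_prod_beta by (rule continuous_on_norm_powr_deriv2[OF p line dir])
  qed (rule has_real_derivative_norm_powr_deriv[OF p])
qed

lemma Ham_add_scaled:
  assumes "L2T u" "L2T v"
  shows "Ham lam p J (\<lambda>\<theta>. u \<theta> + of_real t * v \<theta>)
    = (1/2) * tavg (\<lambda>\<theta>. \<Sum>j\<in>UNIV. cmod (partialD (PJ J u) j \<theta> + of_real t * partialD (PJ J v) j \<theta>) ^ 2)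
      - lam / p * tavg (\<lambda>\<theta>. cmod (PJ J u \<theta> + of_real t * PJ J v \<theta>) powr p)"
proof -
  have "gradnorm2 (PJ J (\<lambda>\<theta>. u \<theta> + of_real t * v \<theta>))
      = (\<lambda>\<theta>. \<Sum>j\<in>UNIV. cmod (partialD (PJ J u) j \<theta> + of_real t * partialD (PJ J v) j \<theta>) ^ 2)"
    by (rule ext) (rule gradnorm2_PJ_add_scaled[OF assms])
  then show ?thesis
    unfolding Ham_def PJ_add_scaled[OF assms] by (simp add: PJ_eq_trig trig_add_scaled)
qed

lemma Ham_second_deriv:
  fixes u v :: "real^'n \<Rightarrow> complex" and J :: "nat^'n"
  assumes p: "p \<ge> 2" and u: "L2T u" and v: "L2T v"
  shows "deriv (deriv (\<lambda>t. Ham lam p J (\<lambda>\<theta>. u \<theta> + of_real t * v \<theta>))) 0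
    = tavg (gradnorm2 (PJ J v)) - lam / p * tavg (\<lambda>\<theta>. norm_powr_deriv2 p (PJ J u \<theta>) (PJ J v \<theta>))"
proof -
  have cont: "continuous_on UNIV (PJ J w)" "continuous_on UNIV (partialD (PJ J w) j)" for w j
    using continuous_on_PJ_comp[OF continuous_on_id] continuous_on_partialD_PJ_comp[OF continuous_on_id]
    by simp_all
  note G = tavg_sum_norm_add_scaled_squared_derivs[of "partialD (PJ J u)" "partialD (PJ J v)",
      OF cont(2)[of u] cont(2)[of v]]
  note H = tavg_norm_powr_add_scaled_derivs[OF p cont(1)[of u] cont(1)[of v]]
  have "deriv (\<lambda>t. Ham lam p J (\<lambda>\<theta>. u \<theta> + of_real t * v \<theta>))
      = (\<lambda>t. (1/2) * tavg (\<lambda>\<theta>. \<Sum>j\<in>UNIV. 2 * Re (cnj (partialD (PJ J u) j \<theta> + of_real t * partialD (PJ J v) j \<theta>) * partialD (PJ J v) j \<theta>))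
        - lam / p * tavg (\<lambda>\<theta>. norm_powr_deriv p (PJ J u \<theta> + of_real t * PJ J v \<theta>) (PJ J v \<theta>)))"
    unfolding Ham_add_scaled[OF u v] by (intro ext DERIV_imp_deriv DERIV_diff DERIV_cmult G(1) H(1))
  moreover have "((\<lambda>t. (1/2) * tavg (\<lambda>\<theta>. \<Sum>j\<in>UNIV. 2 * Re (cnj (partialD (PJ J u) j \<theta> + of_real t * partialD (PJ J v) j \<theta>) * partialD (PJ J v) j \<theta>))
        - lam / p * tavg (\<lambda>\<theta>. norm_powr_deriv p (PJ J u \<theta> + of_real t * PJ J v \<theta>) (PJ J v \<theta>)))
      has_real_derivative (1/2) * tavg (\<lambda>\<theta>. \<Sum>j\<in>UNIV. 2 * cmod (partialD (PJ J v) j \<theta>) ^ 2)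
        - lam / p * tavg (\<lambda>\<theta>. norm_powr_deriv2 p (PJ J u \<theta> + of_real 0 * PJ J v \<theta>) (PJ J v \<theta>))) (at 0)"
    by (intro DERIV_diff DERIV_cmult G(2) H(2))
  ultimately show ?thesis
    by (simp add: DERIV_imp_deriv gradnorm2_def[abs_def] sum_distrib_left[symmetric] tavg_cmult)
qed

section \<open>Uniform convexity\<close>

lemma tavg_gradnorm2_PJ_ge:
  "block_weight J * tavg (\<lambda>\<theta>. cmod (PJ J v \<theta>) ^ 2) \<le> tavg (gradnorm2 (PJ J v))"
proof -
  have "block_weight J * tavg (\<lambda>\<theta>. cmod (PJ J v \<theta>) ^ 2)
      = (\<Sum>k\<in>DeltaJ J. cmod (fcoeff v k) ^ 2 * block_weight J)"
    unfolding PJ_eq_trig tavg_norm_trig_squared[OF finite_DeltaJ] by (simp add: sum_distrib_left mult_ac)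
  also have "\<dots> \<le> (\<Sum>k\<in>DeltaJ J. cmod (fcoeff v k) ^ 2 * (\<Sum>j\<in>UNIV. (real_of_int (k $ j))\<^sup>2))"
    by (intro sum_mono mult_left_mono block_weight_le_sum_squares) auto
  also have "\<dots> = tavg (gradnorm2 (PJ J v))"
    unfolding PJ_eq_trig tavg_gradnorm2_trig[OF finite_DeltaJ] ..
  finally show ?thesis .
qed

lemma norm_PJ_le:
  assumes "L2T u"
  shows "cmod (PJ J u \<theta>) \<le> sqrt (real (card (DeltaJ J)) * tavg (\<lambda>\<theta>. cmod (u \<theta>) ^ 2))"
proof -
  have "real (card (DeltaJ J)) * (\<Sum>k\<in>DeltaJ J. cmod (fcoeff u k) ^ 2)
      \<le> real (card (DeltaJ J)) * tavg (\<lambda>\<theta>. cmod (u \<theta>) ^ 2)"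
    by (intro mult_left_mono bessel_inequality[OF assms finite_DeltaJ]) simp
  then show ?thesis
    using norm_trig_le[OF finite_DeltaJ[of J], of "fcoeff u" \<theta>] unfolding PJ_eq_trig
    by (meson order_trans real_sqrt_le_mono)
qed

lemma Ham_second_deriv_ge:
  fixes u v :: "real^'n \<Rightarrow> complex" and J :: "nat^'n" and p N lam :: real
  assumes p: "2 \<le> p" "p \<le> 2 + 4 / real CARD('n)" and N: "1 \<le> N" and J: "\<forall>i. 1 \<le> J $ i"
    and u: "L2T u" "tavg (\<lambda>\<theta>. cmod (u \<theta>) ^ 2) \<le> N" and v: "L2T v" and lam: "0 \<le> lam"
  shows "block_weight J * (1 - lam * (p - 1) * N ^ 2) * tavg (\<lambda>\<theta>. cmod (PJ J v \<theta>) ^ 2)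
    \<le> deriv (deriv (\<lambda>t. Ham lam p J (\<lambda>\<theta>. u \<theta> + of_real t * v \<theta>))) 0"
proof -
  define M where "M = block_weight J"
  define X where "X = tavg (\<lambda>\<theta>. cmod (PJ J v \<theta>) ^ 2)"
  define C where "C = real (card (DeltaJ J))"
  define S where "S = sqrt (C * N)"
  have X: "0 \<le> X"
    unfolding X_def PJ_eq_trig tavg_norm_trig_squared[OF finite_DeltaJ] by (simp add: sum_nonneg)
  have C: "1 \<le> C"
    using DeltaJ_nonempty[OF J] finite_DeltaJ unfolding C_def
    by (metis card_0_eq less_one not_le of_nat_1 of_nat_le_iff)
  then have S: "0 < S"
    unfolding S_def using N by simp
  have "cmod (PJ J u \<theta>) \<le> S" for \<theta>
    using norm_PJ_le[OF u(1), of J \<theta>] u(2) C unfolding S_def C_def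
    by (meson order_trans mult_left_mono real_sqrt_le_mono of_nat_0_le_iff)
  then have "tavg (\<lambda>\<theta>. norm_powr_deriv2 p (PJ J u \<theta>) (PJ J v \<theta>))
      \<le> tavg (\<lambda>\<theta>. p * (p - 1) * S powr (p - 2) * cmod (PJ J v \<theta>) ^ 2)"
    by (intro tavg_mono continuous_on_norm_powr_deriv2 norm_powr_deriv2_le p S continuous_intros)
  also have "\<dots> = p * (p - 1) * S powr (p - 2) * X"
    unfolding X_def by (rule tavg_cmult)
  also have "\<dots> \<le> p * (p - 1) * (M * N ^ 2) * X"
    unfolding S_def M_def using p X C N card_DeltaJ_powr_le_block_weight[of J]
    by (intro mult_left_mono mult_right_mono sqrt_mult_powr_le) (auto simp: C_def)
  finally have "lam / p * tavg (\<lambda>\<theta>. norm_powr_deriv2 p (PJ J u \<theta>) (PJ J v \<theta>))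
      \<le> lam / p * (p * (p - 1) * (M * N ^ 2) * X)"
    using p lam by (intro mult_left_mono) auto
  also have "\<dots> = lam * (p - 1) * N ^ 2 * M * X"
    using p by (simp add: field_simps)
  finally have nonlinear: "lam / p * tavg (\<lambda>\<theta>. norm_powr_deriv2 p (PJ J u \<theta>) (PJ J v \<theta>))
      \<le> lam * (p - 1) * N ^ 2 * M * X" .
  have "M * X \<le> tavg (gradnorm2 (PJ J v))"
    unfolding M_def X_def by (rule tavg_gradnorm2_PJ_ge)
  with nonlinear show ?thesis
    unfolding Ham_second_deriv[OF p(1) u(1) v] M_def[symmetric] X_def[symmetric]
    by (simp add: algebra_simps)
qed

theorem proposition2p2:
  fixes p N :: real
  assumes "2 \<le> p" and "p \<le> 2 + 4 / real CARD('n::finite)" and "N > 0"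
  shows "\<exists>lam>0. \<forall>J::nat^'n. (\<forall>i. 1 \<le> J $ i) \<longrightarrow>
    (\<exists>c>0. \<forall>u\<in>Omega N. \<forall>v. L2T v \<longrightarrow>
       deriv (deriv (\<lambda>t. Ham lam p J (\<lambda>\<theta>. u \<theta> + of_real t * v \<theta>))) 0
         \<ge> c * tavg (\<lambda>\<theta>. (cmod (PJ J v \<theta>))^2))"
proof -
  define N' where "N' = max 1 N"
  define lam where "lam = 1 / (2 * (p - 1) * N' ^ 2)"
  have N': "1 \<le> N'" "N \<le> N'"
    unfolding N'_def by auto
  have lam: "0 < lam" "lam * (p - 1) * N' ^ 2 = 1 / 2"
    unfolding lam_def using assms(1) N' by auto
  have "block_weight J / 2 * tavg (\<lambda>\<theta>. (cmod (PJ J v \<theta>))^2)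
      \<le> deriv (deriv (\<lambda>t. Ham lam p J (\<lambda>\<theta>. u \<theta> + of_real t * v \<theta>))) 0"
    if J: "\<forall>i. 1 \<le> J $ i" and u: "u \<in> Omega N" and v: "L2T v" for J :: "nat^'n" and u v
  proof -
    have "L2T u" "tavg (\<lambda>\<theta>. (cmod (u \<theta>))^2) \<le> N'"
      using u N'(2) unfolding Omega_def by auto
    from Ham_second_deriv_ge[OF assms(1,2) N'(1) J this v less_imp_le[OF lam(1)]] show ?thesis
      by (simp add: lam(2))
  qed
  moreover have "0 < block_weight J / 2" for J :: "nat^'n"
    using block_weight_pos[of J] by simp
  ultimately show ?thesis
    using lam(1) by blast
qed

end
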